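(* For $\theta_0\in[0,\bar\theta)$ and $s\in\mathcal S(\theta_0)$ let $$W(\theta_0,s)=\int_{\theta_0}^{\bar\theta}\frac{1-F(\theta)}{f(\theta)}\big(s(\theta)+v'(\theta)\big)dF(\theta)+v(0)\,\mathbf 1[\theta_0=0]$$ (consumer surplus under the constraint that prices are nonnegative). Then: (i) if $F$ satisfies IFR, $W$ is maximized over all $\theta_0\in[0,\bar\theta)$, $s\in\mathcal S(\theta_0)$ by $\theta_0=0$ and $s\equiv\tfrac12$ (total pooling without exclusion, implemented with prices $p\equiv0$); (ii) if $F$ satisfies DFR, $W$ is maximized by $\theta_0=0$ and $s=F$ (full separation without exclusion, implemented with prices $p(\theta)=\int_0^\theta x\,dF(x)$).
   Context: Let $\bar\theta\in(0,\infty]$, $\Theta=[0,\bar\theta)$ (closed at $\bar\theta$ if finite), $F$ a cdf on $\Theta$ with continuous, strictly positive density $f$, $dF=f\,d\theta$, and finite mean. The intrinsic value $v:\Theta\to[0,\infty)$ is twice continuously differentiable with $v'\ge0$, $v''\le0$, and $\int\frac{1-F}{f}v'\,dF<\infty$. IFR means $\frac{1-F}{f}$ is nonincreasing on $\Theta$; DFR means it is nondecreasing. For $\theta_0\in[0,\bar\theta)$ and bounded measurable $a,b$ on $[\theta_0,\bar\theta)$, write $b\in\mathrm{MPS}(a)$ if $\int_x^{\bar\theta}b\,dF\le\int_x^{\bar\theta}a\,dF$ for all $x\in[\theta_0,\bar\theta)$, with equality at $x=\theta_0$. $\mathcal S(\theta_0)$ is the set of nondecreasing $s:[\theta_0,\bar\theta)\to[0,1]$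 with $s\in\mathrm{MPS}(F)$ on $[\theta_0,\bar\theta)$. A buyer of type $\theta$ paying $p\ge0$ for status $\sigma$ gets $\theta\sigma-p+v(\theta)$; excluded buyers get $0$. *)

theory Defs
  imports "HOL-Analysis.Analysis"
begin

definition Theta :: "ereal \<Rightarrow> real set" where
  "Theta tb = {x. 0 \<le> x \<and> ereal x \<le> tb}"

definition Ico_tb :: "real \<Rightarrow> ereal \<Rightarrow> real set" where
  "Ico_tb a tb = {x. a \<le> x \<and> ereal x < tb}"

definition intdF :: "(real \<Rightarrow> real) \<Rightarrow> real set \<Rightarrow> (real \<Rightarrow> real) \<Rightarrow> real" where
  "intdF f A g = (LINT x:A|lborel. g x * f x)"

definition std_assms ::
  "ereal \<Rightarrow> (real \<Rightarrow> real) \<Rightarrow> (real \<Rightarrow> real) \<Rightarrow> (real \<Rightarrow> real) \<Rightarrow> (real \<Rightarrow> real) \<Rightarrow> (real \<Rightarrow> real) \<Rightarrow> bool"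
  where
  "std_assms tb F f v v1 v2 \<longleftrightarrow>
     0 < tb \<and>
     continuous_on (Theta tb) f \<and> (\<forall>x\<in>Theta tb. 0 < f x) \<and>
     set_integrable lborel (Theta tb) f \<and> (LINT x:Theta tb|lborel. f x) = 1 \<and>
     (\<forall>x\<in>Theta tb. F x = (LINT y:{0..x}|lborel. f y)) \<and>
     set_integrable lborel (Theta tb) (\<lambda>x. x * f x) \<and>
     (\<forall>x\<in>Theta tb. 0 \<le> v x) \<and>
     (\<forall>x\<in>Theta tb. (v has_real_derivative v1 x) (at x within Theta tb)) \<and>
     (\<forall>x\<in>Theta tb. (v1 has_real_derivative v2 x) (at x within Theta tb)) \<and>
     continuous_on (Theta tb) v2 \<and>
     (\<forall>x\<in>Theta tb. 0 \<le> v1 x) \<and> (\<forall>x\<in>Theta tb. v2 x \<le> 0) \<and>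
     set_integrable lborel (Theta tb) (\<lambda>x. (1 - F x) / f x * v1 x * f x)"

definition IFR :: "ereal \<Rightarrow> (real \<Rightarrow> real) \<Rightarrow> (real \<Rightarrow> real) \<Rightarrow> bool" where
  "IFR tb F f \<longleftrightarrow> antimono_on (Theta tb) (\<lambda>x. (1 - F x) / f x)"

definition DFR :: "ereal \<Rightarrow> (real \<Rightarrow> real) \<Rightarrow> (real \<Rightarrow> real) \<Rightarrow> bool" where
  "DFR tb F f \<longleftrightarrow> mono_on (Theta tb) (\<lambda>x. (1 - F x) / f x)"

definition MPS :: "ereal \<Rightarrow> (real \<Rightarrow> real) \<Rightarrow> real \<Rightarrow> (real \<Rightarrow> real) \<Rightarrow> (real \<Rightarrow> real) \<Rightarrow> bool" where
  "MPS tb f t0 b a \<longleftrightarrow>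
     bounded (a ` Ico_tb t0 tb) \<and> bounded (b ` Ico_tb t0 tb) \<and>
     set_borel_measurable lborel (Ico_tb t0 tb) a \<and>
     set_borel_measurable lborel (Ico_tb t0 tb) b \<and>
     (\<forall>x\<in>Ico_tb t0 tb. intdF f (Ico_tb x tb) b \<le> intdF f (Ico_tb x tb) a) \<and>
     intdF f (Ico_tb t0 tb) b = intdF f (Ico_tb t0 tb) a"

definition Sset :: "ereal \<Rightarrow> (real \<Rightarrow> real) \<Rightarrow> (real \<Rightarrow> real) \<Rightarrow> real \<Rightarrow> (real \<Rightarrow> real) set" where
  "Sset tb F f t0 = {s. mono_on (Ico_tb t0 tb) s \<and> (\<forall>x\<in>Ico_tb t0 tb. 0 \<le> s x \<and> s x \<le> 1)
                       \<and> MPS tb f t0 s F}"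

definition W :: "ereal \<Rightarrow> (real \<Rightarrow> real) \<Rightarrow> (real \<Rightarrow> real) \<Rightarrow> (real \<Rightarrow> real) \<Rightarrow> (real \<Rightarrow> real)
                  \<Rightarrow> real \<Rightarrow> (real \<Rightarrow> real) \<Rightarrow> real" where
  "W tb F f v v1 t0 s =
     intdF f (Ico_tb t0 tb) (\<lambda>x. (1 - F x) / f x * (s x + v1 x)) + (if t0 = 0 then v 0 else 0)"

end

theory Submission
  imports Defs
begin

text \<open>
  Since \<open>(1 - F) / f \<cdot> s \<cdot> f = (1 - F) s\<close>, the surplus is \<open>\<integral>\<^sub>t\<^sub>0 (1 - F) s\<close> plus terms that do
  not depend on \<open>s\<close> and can only grow when \<open>t\<^sub>0\<close> is lowered to \<open>0\<close>. Write \<open>1 - F = g f\<close> with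
  \<open>g = (1 - F) / f\<close>, the inverse hazard rate.

  Under DFR, \<open>g\<close> is nondecreasing, so by the layer-cake formula \<open>\<integral> g (F - s) dF\<close> is an average
  over \<open>c\<close> of integrals of \<open>(F - s) dF\<close> over the upper tails \<open>{g > c}\<close>; these are nonnegative
  because \<open>s \<in> MPS(F)\<close>. Hence \<open>\<integral> (1 - F) s \<le> \<integral> (1 - F) F\<close>, and full separation is optimal.

  Under IFR, \<open>g\<close> is nonincreasing while \<open>s\<close> is nondecreasing, so for every \<open>c\<close> there is a
  constant \<open>K\<close> with \<open>(g - K)(s - c) \<le> 0\<close>. Choosing for \<open>c\<close> the \<open>dF\<close>-mean of \<open>s\<close> on the tail,
  which MPS forces to equal that of \<open>F\<close>, namely \<open>(1 + F t\<^sub>0) / 2\<close>, and integrating against \<open>dF\<close>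
  gives \<open>\<integral>\<^sub>t\<^sub>0 (1 - F) s \<le> c \<integral>\<^sub>t\<^sub>0 (1 - F)\<close>. Comparing \<open>g\<close> with \<open>g t\<^sub>0\<close> on both sides of \<open>t\<^sub>0\<close>
  bounds this by \<open>\<integral>\<^sub>0 (1 - F) / 2\<close>, the value of pooling.
\<close>

lemma Ico_tb_sets [measurable]: "Ico_tb a tb \<in> sets borel"
proof (cases tb)
  case (real r)
  then have "Ico_tb a tb = {a..<r}" by (auto simp: Ico_tb_def)
  then show ?thesis by simp
next
  case PInf
  then have "Ico_tb a tb = {a..}" by (auto simp: Ico_tb_def)
  then show ?thesis by simp
next
  case MInf
  then have "Ico_tb a tb = {}" by (auto simp: Ico_tb_def)
  then show ?thesis by simp
qed

lemma Ico_tb_mono: "a \<le> b \<Longrightarrow> Ico_tb b tb \<subseteq> Ico_tb a tb"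
  by (auto simp: Ico_tb_def)

lemma set_borel_measurable_iff_restrict_space:
  fixes g :: "real \<Rightarrow> real"
  assumes "A \<in> sets borel"
  shows "set_borel_measurable lborel A g \<longleftrightarrow> g \<in> borel_measurable (restrict_space borel A)"
  unfolding set_borel_measurable_def using borel_measurable_restrict_space_iff[of A borel g] assms
  by simp

lemma set_borel_measurable_mono_on:
  fixes g :: "real \<Rightarrow> real"
  assumes "mono_on A g" "A \<in> sets borel"
  shows "set_borel_measurable lborel A g"
  using borel_measurable_mono_on_fnc[OF assms(1)] set_borel_measurable_iff_restrict_space[OF assms(2)]
  by simp

lemma set_integrable_imp_set_borel_measurable:
  fixes p :: "real \<Rightarrow> real"
  assumes "set_integrable lborel A p"
  shows "set_borel_measurable lborel A p"
  using assms unfolding set_integrable_def set_borel_measurable_def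
  by (simp add: borel_measurable_integrable)

lemma set_integrable_mult_bounded:
  fixes p b :: "real \<Rightarrow> real"
  assumes A: "A \<in> sets borel" and p: "set_integrable lborel A p"
    and b: "set_borel_measurable lborel A b" and b_le: "\<And>x. x \<in> A \<Longrightarrow> \<bar>b x\<bar> \<le> 1"
  shows "set_integrable lborel A (\<lambda>x. p x * b x)"
proof (rule set_integrable_bound[OF p])
  show "set_borel_measurable lborel A (\<lambda>x. p x * b x)"
    using set_integrable_imp_set_borel_measurable[OF p] b
    by (simp add: set_borel_measurable_iff_restrict_space[OF A])
  show "AE x in lborel. x \<in> A \<longrightarrow> norm (p x * b x) \<le> norm (p x)"
    using b_le by (auto simp: abs_mult intro!: mult_left_le)
qed

lemma set_integral_nonneg:
  fixes h :: "'a \<Rightarrow> real"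
  assumes "\<And>x. x \<in> A \<Longrightarrow> 0 \<le> h x"
  shows "0 \<le> (LINT x:A|M. h x)"
  unfolding set_lebesgue_integral_def
  by (rule Bochner_Integration.integral_nonneg) (use assms in \<open>auto simp: indicator_def\<close>)

lemma set_integral_mono_set_nonneg:
  fixes h :: "'a \<Rightarrow> real"
  assumes "set_integrable M B h" "A \<in> sets M" "B \<in> sets M" "A \<subseteq> B"
    and "\<And>x. x \<in> B \<Longrightarrow> 0 \<le> h x"
  shows "(LINT x:A|M. h x) \<le> (LINT x:B|M. h x)"
proof -
  have "(LINT x:B|M. h x) = (LINT x:A|M. h x) + (LINT x:B-A|M. h x)"
    using assms set_integral_Un[of A "B - A" M h] set_integrable_subset[OF assms(1)]
    by (simp add: Un_absorb1)
  moreover have "0 \<le> (LINT x:B-A|M. h x)" using assms by (intro set_integral_nonneg) auto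
  ultimately show ?thesis by simp
qed

text \<open>Fubini for \<open>[0 \<le> c < g x] h x\<close> writes \<open>\<integral> g h\<close> as \<open>\<integral>\<^sub>0\<^sup>\<infinity> \<integral>\<^bsub>{g > c}\<^esub> h dc\<close>.\<close>

lemma set_integral_nonneg_layer_cake:
  fixes g h :: "real \<Rightarrow> real"
  assumes A[measurable]: "A \<in> sets borel"
    and g: "set_borel_measurable lborel A g" and g_nn: "\<And>x. x \<in> A \<Longrightarrow> 0 \<le> g x"
    and h: "set_borel_measurable lborel A h"
    and gh: "set_integrable lborel A (\<lambda>x. g x * h x)"
    and level: "\<And>c. 0 \<le> c \<Longrightarrow> 0 \<le> (LINT x:{x\<in>A. c < g x}|lborel. h x)"
  shows "0 \<le> (LINT x:A|lborel. g x * h x)"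
proof -
  define G where "G x = indicator A x * g x" for x
  define H where "H x = indicator A x * h x" for x
  have G_nn: "0 \<le> G x" for x using g_nn by (simp add: G_def indicator_def)
  have [measurable]: "G \<in> borel_measurable borel" "H \<in> borel_measurable borel"
    using g h unfolding G_def H_def set_borel_measurable_def by simp_all
  define k where "k = (\<lambda>(x, c). indicator {0..<G x} c * H x)"
  have "k = (\<lambda>(x, c). if 0 \<le> c \<and> c < G x then H x else 0)"
    by (auto simp: k_def indicator_def fun_eq_iff)
  then have k_meas: "k \<in> borel_measurable (lborel \<Otimes>\<^sub>M lborel)" by simp
  have interval: "(LINT c|lborel. indicator {0..<G x} c * b) = G x * b" for x b
    using G_nn[of x] by simp
  have inner: "(LINT c|lborel. k (x, c)) = G x * H x" for x
    unfolding k_def case_prod_conv by (rule interval)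
  have "integrable (lborel \<Otimes>\<^sub>M lborel) k"
  proof (rule lborel_pair.Fubini_integrable[OF k_meas])
    have "(LINT c|lborel. norm (k (x, c))) = \<bar>indicator A x * (g x * h x)\<bar>" for x
      using g_nn by (simp add: k_def abs_mult interval) (simp add: G_def H_def indicator_def)
    then show "integrable lborel (\<lambda>x. LINT c|lborel. norm (k (x, c)))"
      using gh by (simp add: set_integrable_def)
    have "integrable lborel (\<lambda>c. indicator {0..<G x} c * H x)" for x
      using G_nn[of x] by (intro integrable_mult_left integrable_real_indicator) auto
    then show "AE x in lborel. integrable lborel (\<lambda>c. k (x, c))"
      by (simp add: k_def)
  qed
  then have "(LINT c|lborel. LINT x|lborel. k (x, c)) = (LINT x|lborel. LINT c|lborel. k (x, c))"
    using lborel_pair.Fubini_integral[of "\<lambda>x c. k (x, c)"] by simp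
  also have "\<dots> = (LINT x:A|lborel. g x * h x)"
    unfolding inner set_lebesgue_integral_def
    by (rule Bochner_Integration.integral_cong) (auto simp: G_def H_def indicator_def)
  finally have swap: "(LINT x:A|lborel. g x * h x) = (LINT c|lborel. LINT x|lborel. k (x, c))" ..
  have "(LINT x|lborel. k (x, c)) = (if 0 \<le> c then (LINT x:{x\<in>A. c < g x}|lborel. h x) else 0)" for c
    by (auto simp: k_def G_def H_def set_lebesgue_integral_def indicator_def intro!: Bochner_Integration.integral_cong)
  then show ?thesis
    unfolding swap using level by (auto intro!: Bochner_Integration.integral_nonneg)
qed

lemma upward_closed_subset_Ico_tb:
  assumes S: "S \<subseteq> Ico_tb t0 tb" "S \<noteq> {}"
    and up: "\<And>x y. x \<in> S \<Longrightarrow> y \<in> Ico_tb t0 tb \<Longrightarrow> x \<le> y \<Longrightarrow> y \<in> S"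
  obtains z where "z \<in> Ico_tb t0 tb" "S \<subseteq> Ico_tb z tb" "Ico_tb z tb - {z} \<subseteq> S"
proof -
  have S_mem: "t0 \<le> x \<and> ereal x < tb" if "x \<in> S" for x
    using S(1) that by (auto simp: Ico_tb_def)
  have bdd: "bdd_below S" using S_mem by (intro bdd_belowI[where m = t0]) blast
  have Inf_le: "Inf S \<le> x" if "x \<in> S" for x using cInf_lower[OF that bdd] .
  have sub: "S \<subseteq> Ico_tb (Inf S) tb" using S_mem Inf_le by (auto simp: Ico_tb_def)
  obtain y where y: "y \<in> S" using S(2) by auto
  have "ereal (Inf S) < tb"
    using le_less_trans[of "ereal (Inf S)" "ereal y" tb] Inf_le[OF y] S_mem[OF y] by simp
  moreover have "t0 \<le> Inf S" using S(2) S_mem by (intro cInf_greatest) blast+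
  ultimately have mem: "Inf S \<in> Ico_tb t0 tb" by (simp add: Ico_tb_def)
  have "Ico_tb (Inf S) tb - {Inf S} \<subseteq> S"
  proof
    fix x assume x: "x \<in> Ico_tb (Inf S) tb - {Inf S}"
    then have "Inf S < x" by (auto simp: Ico_tb_def)
    then obtain w where w: "w \<in> S" "w < x" using cInf_less_iff[OF S(2) bdd] by blast
    have "x \<in> Ico_tb t0 tb" using x S_mem[OF w(1)] w(2) by (simp add: Ico_tb_def)
    then show "x \<in> S" using up[OF w(1)] w(2) by simp
  qed
  with mem sub show thesis using that by blast
qed

text \<open>The pointwise step behind Chebyshev's integral inequality: \<open>(g x - K) (s x - c) \<le> 0\<close>.\<close>

lemma antimono_mono_pivot:
  fixes g s :: "real \<Rightarrow> real"
  assumes g: "antimono_on I g" and s: "mono_on I s"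
    and bdd: "bdd_below (g ` I)" "bdd_above (g ` I)"
  obtains K where "\<And>x. x \<in> I \<Longrightarrow> g x * (s x - c) \<le> K * (s x - c)"
proof -
  define L where "L = {x \<in> I. s x < c}"
  define K where "K = (if L = {} then Sup (g ` I) else Inf (g ` L))"
  have "g x * (s x - c) \<le> K * (s x - c)" if x: "x \<in> I" for x
  proof (cases "x \<in> L")
    case True
    have "bdd_below (g ` L)" using bdd(1) by (rule bdd_below_mono) (auto simp: L_def)
    then have "Inf (g ` L) \<le> g x" using True by (intro cInf_lower) auto
    then have "K \<le> g x" using True by (auto simp: K_def)
    moreover have "s x - c \<le> 0" using True by (simp add: L_def)
    ultimately show ?thesis by (rule mult_right_mono_neg)
  next
    case False
    have "g x \<le> K"
    proof (cases "L = {}")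
      case True
      have "g x \<le> Sup (g ` I)" using x bdd(2) by (intro cSup_upper) auto
      then show ?thesis using True by (simp add: K_def)
    next
      case ne: False
      have "g x \<le> g y" if y: "y \<in> L" for y
      proof -
        have "y \<in> I" "s y < c" using y by (auto simp: L_def)
        have "s y < s x" using False x \<open>s y < c\<close> by (simp add: L_def)
        then have "y \<le> x" using s \<open>y \<in> I\<close> x by (force simp: monotone_on_def)
        then show ?thesis using g \<open>y \<in> I\<close> x by (auto simp: monotone_on_def)
      qed
      then have "g x \<le> Inf (g ` L)" using ne by (intro cInf_greatest) auto
      then show ?thesis using ne by (simp add: K_def)
    qed
    moreover have "0 \<le> s x - c" using False x by (simp add: L_def)
    ultimately show ?thesis by (rule mult_right_mono)
  qed
  then show ?thesis using that by blast
qed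

text \<open>The two triangles \<open>y \<le> z\<close> and \<open>z \<le> y\<close> have equal mass by Tonelli and cover the square,
  the diagonal being a null set.\<close>

lemma nn_integral_ordered_pairs:
  fixes p :: "real \<Rightarrow> real"
  assumes p[measurable]: "p \<in> borel_measurable borel" and p_nn: "\<And>x. 0 \<le> p x"
  defines "P \<equiv> \<lambda>y z. ennreal (p y * p z * of_bool (y \<le> z))"
  shows "(\<integral>\<^sup>+y. \<integral>\<^sup>+z. P y z \<partial>lborel \<partial>lborel) + (\<integral>\<^sup>+y. \<integral>\<^sup>+z. P y z \<partial>lborel \<partial>lborel)
    = (\<integral>\<^sup>+y. ennreal (p y) \<partial>lborel) * (\<integral>\<^sup>+y. ennreal (p y) \<partial>lborel)"
proof -
  let ?N = "\<integral>\<^sup>+y. ennreal (p y) \<partial>lborel"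
  have P_meas: "case_prod P \<in> borel_measurable (lborel \<Otimes>\<^sub>M lborel)"
    unfolding P_def by measurable
  have [measurable]: "case_prod P \<in> borel_measurable (borel \<Otimes>\<^sub>M lborel)"
    "(\<lambda>(y, z). P z y) \<in> borel_measurable (borel \<Otimes>\<^sub>M lborel)"
    unfolding P_def by measurable
  have swap: "(\<integral>\<^sup>+y. \<integral>\<^sup>+z. P y z \<partial>lborel \<partial>lborel) = (\<integral>\<^sup>+y. \<integral>\<^sup>+z. P z y \<partial>lborel \<partial>lborel)"
    using lborel_pair.Fubini'[OF P_meas] by simp
  have slice: "(\<integral>\<^sup>+z. P y z \<partial>lborel) + (\<integral>\<^sup>+z. P z y \<partial>lborel) = ennreal (p y) * ?N" for y
  proof -
    have "(\<integral>\<^sup>+z. P y z \<partial>lborel) + (\<integral>\<^sup>+z. P z y \<partial>lborel) = (\<integral>\<^sup>+z. P y z + P z y \<partial>lborel)"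
      by (rule nn_integral_add[symmetric]) (auto simp: P_def)
    also have "\<dots> = (\<integral>\<^sup>+z. ennreal (p y) * ennreal (p z) \<partial>lborel)"
    proof (rule nn_integral_cong_AE)
      show "AE z in lborel. P y z + P z y = ennreal (p y) * ennreal (p z)"
        using AE_lborel_singleton[of y]
        by eventually_elim (use p_nn in \<open>auto simp: P_def ennreal_mult'[symmetric] mult_ac\<close>)
    qed
    also have "\<dots> = ennreal (p y) * ?N" by (rule nn_integral_cmult) simp
    finally show ?thesis .
  qed
  have "(\<integral>\<^sup>+y. \<integral>\<^sup>+z. P y z \<partial>lborel \<partial>lborel) + (\<integral>\<^sup>+y. \<integral>\<^sup>+z. P z y \<partial>lborel \<partial>lborel)
      = (\<integral>\<^sup>+y. ennreal (p y) * ?N \<partial>lborel)"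
    unfolding slice[symmetric]
    by (rule nn_integral_add[symmetric]) (auto intro!: lborel.borel_measurable_nn_integral)
  also have "\<dots> = ?N * ?N" by (rule nn_integral_multc) simp
  finally show ?thesis unfolding swap[symmetric] .
qed

lemma nn_integral_indicator_eq_set_integral:
  fixes p :: "real \<Rightarrow> real"
  assumes "set_integrable lborel A p" "\<And>x. x \<in> A \<Longrightarrow> 0 \<le> p x"
  shows "(\<integral>\<^sup>+x. ennreal (indicator A x * p x) \<partial>lborel) = ennreal (LINT x:A|lborel. p x)"
  unfolding set_lebesgue_integral_def real_scaleR_def
  using assms by (intro nn_integral_eq_integral) (auto simp: set_integrable_def indicator_def)

lemma Sset_measurable_bounded:
  assumes "s \<in> Sset tb F f t0"
  shows "set_borel_measurable lborel (Ico_tb t0 tb) s" "\<And>x. x \<in> Ico_tb t0 tb \<Longrightarrow> \<bar>s x\<bar> \<le> 1"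
  using assms by (auto simp: Sset_def MPS_def)

locale standing_assumptions =
  fixes tb :: ereal and F f v v1 v2 :: "real \<Rightarrow> real"
  assumes std: "std_assms tb F f v v1 v2"
begin

abbreviation "T \<equiv> Theta tb"

lemma tb_pos: "0 < tb"
  and f_pos: "\<And>x. x \<in> T \<Longrightarrow> 0 < f x"
  and f_integrable: "set_integrable lborel T f"
  and f_total: "(LINT x:T|lborel. f x) = 1"
  and F_eq_integral_atLeastAtMost: "\<And>x. x \<in> T \<Longrightarrow> F x = (LINT y:{0..x}|lborel. f y)"
  and mean_integrable: "set_integrable lborel T (\<lambda>x. x * f x)"
  and v_nonneg: "\<And>x. x \<in> T \<Longrightarrow> 0 \<le> v x"
  and v1_nonneg: "\<And>x. x \<in> T \<Longrightarrow> 0 \<le> v1 x"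
  and v1_integrable: "set_integrable lborel T (\<lambda>x. (1 - F x) / f x * v1 x * f x)"
  using std unfolding std_assms_def by auto

lemma Ico_tb_subset_Theta: "0 \<le> a \<Longrightarrow> Ico_tb a tb \<subseteq> T"
  by (auto simp: Ico_tb_def Theta_def)

lemma zero_in_Theta: "0 \<in> T"
  using tb_pos by (simp add: Theta_def zero_ereal_def)

lemma atLeastAtMost_subset_Theta:
  assumes "x \<in> T" shows "{0..x} \<subseteq> T"
proof
  fix y assume "y \<in> {0..x}"
  then show "y \<in> T" using assms order.trans[of "ereal y" "ereal x" tb] by (simp add: Theta_def)
qed

lemma f_nonneg: "x \<in> T \<Longrightarrow> 0 \<le> f x"
  using f_pos[of x] by simp

lemma f_integrable_on: "A \<in> sets borel \<Longrightarrow> A \<subseteq> T \<Longrightarrow> set_integrable lborel A f"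
  using f_integrable by (rule set_integrable_subset) auto

lemma Ico_tb_split:
  assumes x: "x \<in> T"
  shows "Ico_tb 0 tb = {0..<x} \<union> Ico_tb x tb"
proof -
  have "ereal y < tb" if "y < x" for y
    using x that less_le_trans[of "ereal y" "ereal x" tb] by (simp add: Theta_def)
  then show ?thesis using x by (auto simp: Theta_def Ico_tb_def)
qed

lemma F_eq_integral_atLeastLessThan: "x \<in> T \<Longrightarrow> F x = (LINT y:{0..<x}|lborel. f y)"
  unfolding F_eq_integral_atLeastAtMost by (rule set_integral_discrete_difference[where X = "{x}"]) auto

lemma tail_integral:
  assumes x: "x \<in> T"
  shows "(LINT y:Ico_tb x tb|lborel. f y) = 1 - F x"
proof -
  have "(LINT y:T|lborel. f y) = (LINT y:Ico_tb 0 tb|lborel. f y)"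
    by (rule set_integral_discrete_difference[where X = "{real_of_ereal tb}"])
      (auto simp: Theta_def Ico_tb_def order.order_iff_strict)
  also have "\<dots> = (LINT y:{0..<x}|lborel. f y) + (LINT y:Ico_tb x tb|lborel. f y)"
    unfolding Ico_tb_split[OF x]
  proof (rule set_integral_Un)
    show "set_integrable lborel {0..<x} f"
      using atLeastAtMost_subset_Theta[OF x] by (intro f_integrable_on) auto
    show "set_integrable lborel (Ico_tb x tb) f"
      using x by (intro f_integrable_on Ico_tb_subset_Theta) (auto simp: Theta_def)
  qed (auto simp: Ico_tb_def)
  finally show ?thesis using f_total F_eq_integral_atLeastLessThan[OF x] by simp
qed

lemma F_nonneg: "x \<in> T \<Longrightarrow> 0 \<le> F x"
  using F_eq_integral_atLeastAtMost atLeastAtMost_subset_Theta f_nonneg by (auto intro!: set_integral_nonneg)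

lemma tail_integral_nonneg: "0 \<le> (LINT y:Ico_tb x tb|lborel. f y)" if "0 \<le> x"
  using Ico_tb_subset_Theta[OF that] f_nonneg by (intro set_integral_nonneg) auto

lemma F_le_1: "x \<in> T \<Longrightarrow> F x \<le> 1"
  using tail_integral tail_integral_nonneg by (fastforce simp: Theta_def)

lemma F_abs_le_1: "x \<in> T \<Longrightarrow> \<bar>F x\<bar> \<le> 1"
  using F_nonneg F_le_1 by simp

lemma F_zero: "F 0 = 0"
proof -
  have "(LINT y:{0..0}|lborel. f y) = (LINT y:{}|lborel. f y)"
    by (rule set_integral_discrete_difference[where X = "{0}"]) auto
  then show ?thesis using F_eq_integral_atLeastAtMost[OF zero_in_Theta] by (simp add: set_lebesgue_integral_def)
qed

lemma F_mono: "mono_on T F"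
proof (rule mono_onI)
  fix x y assume xy: "x \<in> T" "y \<in> T" "x \<le> y"
  have "(LINT z:Ico_tb y tb|lborel. f z) \<le> (LINT z:Ico_tb x tb|lborel. f z)"
    using xy Ico_tb_subset_Theta[of x] f_nonneg
    by (intro set_integral_mono_set_nonneg f_integrable_on Ico_tb_mono) (auto simp: Theta_def)
  then show "F x \<le> F y" using tail_integral xy by simp
qed

lemma F_measurable: "A \<in> sets borel \<Longrightarrow> A \<subseteq> T \<Longrightarrow> set_borel_measurable lborel A F"
  by (rule set_borel_measurable_mono_on[OF mono_on_subset[OF F_mono]])

lemma tail_nn_integral:
  assumes "x \<in> T"
  shows "(\<integral>\<^sup>+y. ennreal (indicator (Ico_tb x tb) y * f y) \<partial>lborel) = ennreal (1 - F x)"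
  using assms Ico_tb_subset_Theta[of x] f_nonneg
  by (subst nn_integral_indicator_eq_set_integral)
    (auto intro!: f_integrable_on simp: tail_integral Theta_def)

lemma f_indicator_measurable [measurable]:
  "A \<in> sets borel \<Longrightarrow> A \<subseteq> T \<Longrightarrow> (\<lambda>y. indicator A y * f y) \<in> borel_measurable borel"
  using f_integrable_on[of A] by (simp add: set_integrable_def borel_measurable_integrable)

text \<open>By Tonelli, \<open>\<integral> (1 - F) = \<integral> y f(y) dy\<close>, which is finite because the type distribution has a mean.\<close>

lemma one_minus_F_integrable: "set_integrable lborel (Ico_tb 0 tb) (\<lambda>x. 1 - F x)"
proof -
  define I where "I = Ico_tb 0 tb"
  have I[measurable]: "I \<in> sets borel" and IT: "I \<subseteq> T"
    using Ico_tb_subset_Theta[of 0] by (simp_all add: I_def)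
  have [measurable]: "(\<lambda>y. indicator I y * f y) \<in> borel_measurable borel"
    using I IT by (rule f_indicator_measurable)
  define G where "G x y = ennreal (indicator I x * of_bool (x \<le> y) * (indicator I y * f y))" for x y
  have G_meas: "case_prod G \<in> borel_measurable (lborel \<Otimes>\<^sub>M lborel)"
    unfolding G_def by measurable
  have inner_y: "(\<integral>\<^sup>+y. G x y \<partial>lborel) = ennreal (indicator I x * (1 - F x))" for x
  proof (cases "x \<in> I")
    case True
    then have "(\<integral>\<^sup>+y. G x y \<partial>lborel) = (\<integral>\<^sup>+y. ennreal (indicator (Ico_tb x tb) y * f y) \<partial>lborel)"
      by (intro nn_integral_cong) (auto simp: G_def I_def Ico_tb_def indicator_def)
    then show ?thesis using True IT tail_nn_integral by auto
  qed (simp add: G_def)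
  have inner_x: "(\<integral>\<^sup>+x. G x y \<partial>lborel) = ennreal (indicator I y * (y * f y))" for y
  proof (cases "y \<in> I")
    case True
    then have y: "0 \<le> y" "0 \<le> f y" using IT f_nonneg by (auto simp: I_def Ico_tb_def)
    have "(\<integral>\<^sup>+x. G x y \<partial>lborel) = (\<integral>\<^sup>+x. ennreal (f y) * indicator {0..y} x \<partial>lborel)"
      using True by (intro nn_integral_cong)
        (auto simp: G_def I_def Ico_tb_def indicator_def intro: le_less_trans[of "ereal _" "ereal y"])
    also have "\<dots> = ennreal (f y) * ennreal y"
      using y by (subst nn_integral_cmult_indicator) auto
    finally show ?thesis using True y by (simp add: ennreal_mult' mult.commute)
  qed (simp add: G_def)
  have "(\<integral>\<^sup>+x. ennreal (indicator I x * (1 - F x)) \<partial>lborel) = (\<integral>\<^sup>+y. \<integral>\<^sup>+x. G x y \<partial>lborel \<partial>lborel)"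
    unfolding inner_y[symmetric] using lborel_pair.Fubini'[OF G_meas] by simp
  also have "\<dots> = ennreal (LINT y:I|lborel. y * f y)"
    unfolding inner_x using IT f_nonneg
    by (intro nn_integral_indicator_eq_set_integral set_integrable_subset[OF mean_integrable])
      (auto simp: I_def Ico_tb_def)
  finally have "(\<integral>\<^sup>+x. ennreal (indicator I x * (1 - F x)) \<partial>lborel) < \<infinity>" by simp
  moreover have "set_borel_measurable lborel I (\<lambda>x. 1 - F x)"
    using F_measurable[OF I IT] by (simp add: set_borel_measurable_iff_restrict_space[OF I])
  ultimately show ?thesis unfolding set_integrable_def I_def[symmetric]
    using IT F_le_1
    by (intro integrableI_nonneg) (auto simp: set_borel_measurable_def indicator_def)
qed

lemma one_minus_F_integrable_on:
  "A \<in> sets borel \<Longrightarrow> A \<subseteq> Ico_tb 0 tb \<Longrightarrow> set_integrable lborel A (\<lambda>x. 1 - F x)"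
  using one_minus_F_integrable by (rule set_integrable_subset) auto

lemma nn_integral_tail_from:
  assumes "y \<in> T" "x \<le> y"
  shows "(\<integral>\<^sup>+z. ennreal (indicator (Ico_tb x tb) z * f z * of_bool (y \<le> z)) \<partial>lborel) = ennreal (1 - F y)"
proof -
  have "indicator (Ico_tb x tb) z * of_bool (y \<le> z) = (indicator (Ico_tb y tb) z :: real)" for z
    using assms(2) by (auto simp: Ico_tb_def indicator_def)
  then show ?thesis using tail_nn_integral[OF assms(1)] by (simp add: mult_ac)
qed

lemma tail_integral_F_times_density:
  assumes x: "x \<in> T"
  shows "(LINT y:Ico_tb x tb|lborel. F y * f y) = (1 - (F x)\<^sup>2) / 2"
proof -
  define J where "J = Ico_tb x tb"
  have x_nn: "0 \<le> x" using x by (simp add: Theta_def)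
  have J[measurable]: "J \<in> sets borel" and JT: "J \<subseteq> T"
    using Ico_tb_subset_Theta[OF x_nn] by (simp_all add: J_def)
  define p where "p y = indicator J y * f y" for y
  have p_meas[measurable]: "p \<in> borel_measurable borel"
    unfolding p_def using J JT by (rule f_indicator_measurable)
  have p_nn: "0 \<le> p y" for y using JT f_nonneg by (auto simp: p_def indicator_def)
  define m where "m = 1 - F x"
  define R where "R = (LINT y:J|lborel. f y * (1 - F y))"
  have R_integrable: "set_integrable lborel J (\<lambda>y. f y * (1 - F y))"
    using JT F_nonneg F_le_1 F_measurable[OF J JT]
    by (intro set_integrable_mult_bounded f_integrable_on J)
      (auto simp: set_borel_measurable_iff_restrict_space[OF J])
  have "(\<integral>\<^sup>+z. ennreal (p y * p z * of_bool (y \<le> z)) \<partial>lborel) = ennreal (indicator J y * (f y * (1 - F y)))" for y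
  proof (cases "y \<in> J")
    case True
    then have y: "y \<in> T" "x \<le> y" using JT by (auto simp: J_def Ico_tb_def)
    have "(\<integral>\<^sup>+z. ennreal (p y * p z * of_bool (y \<le> z)) \<partial>lborel)
        = (\<integral>\<^sup>+z. ennreal (f y) * ennreal (indicator J z * f z * of_bool (y \<le> z)) \<partial>lborel)"
      using True f_nonneg[OF y(1)] by (intro nn_integral_cong) (simp add: p_def ennreal_mult'[symmetric] mult_ac)
    also have "\<dots> = ennreal (f y) * ennreal (1 - F y)"
      unfolding J_def using y f_indicator_measurable[OF Ico_tb_sets Ico_tb_subset_Theta[OF x_nn]]
      by (subst nn_integral_cmult) (auto simp: nn_integral_tail_from)
    finally show ?thesis using True y f_nonneg by (simp add: ennreal_mult')
  qed (simp add: p_def)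
  moreover have "(\<integral>\<^sup>+y. ennreal (indicator J y * (f y * (1 - F y))) \<partial>lborel) = ennreal R"
    unfolding R_def using JT f_nonneg F_le_1
    by (intro nn_integral_indicator_eq_set_integral[OF R_integrable]) auto
  moreover have "(\<integral>\<^sup>+y. ennreal (p y) \<partial>lborel) = ennreal m"
    unfolding p_def m_def J_def using x f_nonneg Ico_tb_subset_Theta[of x]
    by (subst nn_integral_indicator_eq_set_integral) (auto intro!: f_integrable_on simp: tail_integral Theta_def)
  ultimately have "ennreal R + ennreal R = ennreal m * ennreal m"
    using nn_integral_ordered_pairs[OF p_meas p_nn] by simp
  moreover have "0 \<le> R" "0 \<le> m"
    unfolding R_def m_def using x JT f_nonneg F_le_1 by (auto intro!: set_integral_nonneg)
  ultimately have RR: "R + R = m * m"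
    by (simp flip: ennreal_plus ennreal_mult)
  have "(LINT y:J|lborel. F y * f y) = (LINT y:J|lborel. f y - f y * (1 - F y))"
    by (rule set_lebesgue_integral_cong) (auto simp: algebra_simps)
  also have "\<dots> = m - R"
    using set_integral_diff(2)[OF f_integrable_on[OF J JT] R_integrable] x
    by (simp add: R_def m_def J_def tail_integral)
  finally show ?thesis using RR by (simp add: J_def m_def power2_eq_square algebra_simps)
qed

lemma one_minus_F_mult_integrable:
  assumes t0: "0 \<le> t0" and b: "set_borel_measurable lborel (Ico_tb t0 tb) b"
    and b_le: "\<And>x. x \<in> Ico_tb t0 tb \<Longrightarrow> \<bar>b x\<bar> \<le> 1"
  shows "set_integrable lborel (Ico_tb t0 tb) (\<lambda>x. (1 - F x) * b x)"
  using Ico_tb_mono[OF t0] by (intro set_integrable_mult_bounded one_minus_F_integrable_on b b_le) auto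

lemma density_mult_integrable:
  assumes t0: "0 \<le> t0" and b: "set_borel_measurable lborel (Ico_tb t0 tb) b"
    and b_le: "\<And>x. x \<in> Ico_tb t0 tb \<Longrightarrow> \<bar>b x\<bar> \<le> 1"
  shows "set_integrable lborel (Ico_tb t0 tb) (\<lambda>x. f x * b x)"
  using Ico_tb_subset_Theta[OF t0] by (intro set_integrable_mult_bounded f_integrable_on b b_le) auto

lemma F_measurable_bounded:
  assumes "0 \<le> t0"
  shows "set_borel_measurable lborel (Ico_tb t0 tb) F" "\<And>x. x \<in> Ico_tb t0 tb \<Longrightarrow> \<bar>F x\<bar> \<le> 1"
  using F_measurable[OF Ico_tb_sets Ico_tb_subset_Theta[OF assms]] F_abs_le_1 Ico_tb_subset_Theta[OF assms]
  by auto

lemma W_eq: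
  assumes t0: "0 \<le> t0" and s: "set_borel_measurable lborel (Ico_tb t0 tb) s"
    and s_le: "\<And>x. x \<in> Ico_tb t0 tb \<Longrightarrow> \<bar>s x\<bar> \<le> 1"
  shows "W tb F f v v1 t0 s = (LINT x:Ico_tb t0 tb|lborel. (1 - F x) * s x)
     + (LINT x:Ico_tb t0 tb|lborel. (1 - F x) / f x * v1 x * f x) + (if t0 = 0 then v 0 else 0)"
proof -
  let ?I = "Ico_tb t0 tb"
  have IT: "?I \<subseteq> T" by (rule Ico_tb_subset_Theta[OF t0])
  have "(LINT x:?I|lborel. (1 - F x) / f x * (s x + v1 x) * f x)
      = (LINT x:?I|lborel. (1 - F x) * s x + (1 - F x) / f x * v1 x * f x)"
  proof (intro set_lebesgue_integral_cong allI impI)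
    fix x assume "x \<in> ?I"
    then have "f x \<noteq> 0" using IT f_pos by force
    then show "(1 - F x) / f x * (s x + v1 x) * f x = (1 - F x) * s x + (1 - F x) / f x * v1 x * f x"
      by (simp add: field_simps)
  qed simp
  also have "\<dots> = (LINT x:?I|lborel. (1 - F x) * s x) + (LINT x:?I|lborel. (1 - F x) / f x * v1 x * f x)"
  proof (rule set_integral_add(2))
    show "set_integrable lborel ?I (\<lambda>x. (1 - F x) * s x)"
      using one_minus_F_mult_integrable[OF t0 s s_le] .
    show "set_integrable lborel ?I (\<lambda>x. (1 - F x) / f x * v1 x * f x)"
      using set_integrable_subset[OF v1_integrable _ IT] by simp
  qed
  finally show ?thesis unfolding W_def intdF_def by (simp add: mult_ac)
qed

lemma W_le_W_zero:
  assumes t0: "0 \<le> t0" and s: "s \<in> Sset tb F f t0" and s': "s' \<in> Sset tb F f 0"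
    and le: "(LINT x:Ico_tb t0 tb|lborel. (1 - F x) * s x) \<le> (LINT x:Ico_tb 0 tb|lborel. (1 - F x) * s' x)"
  shows "W tb F f v v1 t0 s \<le> W tb F f v v1 0 s'"
proof -
  have "(LINT x:Ico_tb t0 tb|lborel. (1 - F x) / f x * v1 x * f x)
      \<le> (LINT x:Ico_tb 0 tb|lborel. (1 - F x) / f x * v1 x * f x)"
    using t0 Ico_tb_subset_Theta[of 0] F_le_1 f_nonneg v1_nonneg
    by (intro set_integral_mono_set_nonneg set_integrable_subset[OF v1_integrable] Ico_tb_mono) auto
  moreover have "(if t0 = 0 then v 0 else 0) \<le> v 0" using v_nonneg[OF zero_in_Theta] by simp
  ultimately show ?thesis
    using le W_eq[OF t0 Sset_measurable_bounded[OF s]] W_eq[OF order_refl Sset_measurable_bounded[OF s']]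
    by simp
qed

lemma F_bounded: "bounded (F ` Ico_tb 0 tb)"
  using Ico_tb_subset_Theta[of 0] F_nonneg F_le_1 by (intro boundedI[where B = 1]) fastforce

lemma half_in_Sset: "(\<lambda>_. 1/2) \<in> Sset tb F f 0"
proof -
  have IT: "Ico_tb 0 tb \<subseteq> T" by (rule Ico_tb_subset_Theta) simp
  have half: "intdF f (Ico_tb x tb) (\<lambda>_. 1/2) = (1 - F x) / 2" if "x \<in> T" for x
    using tail_integral[OF that] by (simp add: intdF_def)
  have F: "intdF f (Ico_tb x tb) F = (1 - (F x)\<^sup>2) / 2" if "x \<in> T" for x
    using tail_integral_F_times_density[OF that] by (simp add: intdF_def)
  show ?thesis unfolding Sset_def MPS_def
  proof (intro CollectI conjI ballI)
    fix x assume "x \<in> Ico_tb 0 tb"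
    then have x: "x \<in> T" using IT by auto
    show "intdF f (Ico_tb x tb) (\<lambda>_. 1/2) \<le> intdF f (Ico_tb x tb) F"
      unfolding half[OF x] F[OF x] using F_nonneg[OF x] F_le_1[OF x]
      by (simp add: power2_eq_square mult_left_le_one_le)
  next
    show "intdF f (Ico_tb 0 tb) (\<lambda>_. 1/2) = intdF f (Ico_tb 0 tb) F"
      unfolding half[OF zero_in_Theta] F[OF zero_in_Theta] F_zero by simp
  qed (use F_bounded F_measurable[OF Ico_tb_sets IT] in
      \<open>auto simp: monotone_on_def set_borel_measurable_def intro: boundedI[where B = 1]\<close>)
qed

lemma F_in_Sset: "F \<in> Sset tb F f 0"
  using Ico_tb_subset_Theta[of 0] F_bounded F_measurable[OF Ico_tb_sets] F_nonneg F_le_1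
    mono_on_subset[OF F_mono]
  by (auto simp: Sset_def MPS_def)

lemma IFR_mass_below:
  assumes ifr: "IFR tb F f" and t0: "t0 \<in> T"
  shows "F t0 * (LINT x:Ico_tb t0 tb|lborel. 1 - F x) \<le> (LINT x:{0..<t0}|lborel. 1 - F x)"
proof -
  define g where "g x = (1 - F x) / f x" for x
  have g_anti: "g y \<le> g x" if "x \<in> T" "y \<in> T" "x \<le> y" for x y
    using ifr that unfolding IFR_def g_def monotone_on_def by auto
  have one_minus_F: "1 - F x = g x * f x" if "x \<in> T" for x
    using f_pos[OF that] by (simp add: g_def)
  have t0_nn: "0 \<le> t0" using t0 by (simp add: Theta_def)
  have sub: "Ico_tb t0 tb \<subseteq> Ico_tb 0 tb" "{0..<t0} \<subseteq> Ico_tb 0 tb"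
    using Ico_tb_mono[OF t0_nn] Ico_tb_split[OF t0] by auto
  then have sub_T: "Ico_tb t0 tb \<subseteq> T" "{0..<t0} \<subseteq> T"
    using Ico_tb_subset_Theta[of 0] by auto
  have "(LINT x:Ico_tb t0 tb|lborel. 1 - F x) \<le> (LINT x:Ico_tb t0 tb|lborel. g t0 * f x)"
  proof (rule set_integral_mono)
    fix x assume "x \<in> Ico_tb t0 tb"
    then have "x \<in> T" "t0 \<le> x" using sub_T by (auto simp: Ico_tb_def)
    then show "1 - F x \<le> g t0 * f x"
      using g_anti[OF t0] one_minus_F f_nonneg by (simp add: mult_right_mono)
  qed (use sub sub_T in \<open>auto intro!: one_minus_F_integrable_on f_integrable_on\<close>)
  also have "\<dots> = g t0 * (1 - F t0)" using tail_integral[OF t0] by simp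
  finally have upper: "(LINT x:Ico_tb t0 tb|lborel. 1 - F x) \<le> g t0 * (1 - F t0)" .
  have "g t0 * F t0 = (LINT x:{0..<t0}|lborel. g t0 * f x)"
    using F_eq_integral_atLeastLessThan[OF t0] by simp
  also have "\<dots> \<le> (LINT x:{0..<t0}|lborel. 1 - F x)"
  proof (rule set_integral_mono)
    fix x assume "x \<in> {0..<t0}"
    then have "x \<in> T" "x \<le> t0" using sub_T by auto
    then show "g t0 * f x \<le> 1 - F x"
      using g_anti[OF _ t0] one_minus_F f_nonneg by (simp add: mult_right_mono)
  qed (use sub sub_T in \<open>auto intro!: one_minus_F_integrable_on f_integrable_on\<close>)
  finally have lower: "g t0 * F t0 \<le> (LINT x:{0..<t0}|lborel. 1 - F x)" .
  have "0 \<le> g t0" "0 \<le> F t0" "F t0 \<le> 1"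
    using t0 f_nonneg F_nonneg F_le_1 by (simp_all add: g_def)
  then have "F t0 * (g t0 * (1 - F t0)) \<le> g t0 * F t0"
    by (simp add: algebra_simps)
  then show ?thesis
    using upper lower mult_left_mono[OF upper \<open>0 \<le> F t0\<close>] by linarith
qed

lemma Sset_integral_density:
  assumes "s \<in> Sset tb F f t0" "t0 \<in> T"
  shows "(LINT x:Ico_tb t0 tb|lborel. f x * s x) = (1 - (F t0)\<^sup>2) / 2"
  using assms tail_integral_F_times_density by (auto simp: Sset_def MPS_def intdF_def mult.commute)

lemma Sset_tail_integral_nonneg:
  assumes s: "s \<in> Sset tb F f t0" and t0: "0 \<le> t0" and z: "z \<in> Ico_tb t0 tb"
  shows "0 \<le> (LINT x:Ico_tb z tb|lborel. (F x - s x) * f x)"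
proof -
  have z0: "0 \<le> z" and sub: "Ico_tb z tb \<subseteq> Ico_tb t0 tb"
    using t0 z by (auto simp: Ico_tb_def)
  note s_meas = Sset_measurable_bounded[OF s]
  have "set_integrable lborel (Ico_tb z tb) (\<lambda>x. f x * s x)"
    using set_borel_measurable_subset[OF s_meas(1) _ sub] s_meas(2) sub
    by (intro density_mult_integrable[OF z0]) auto
  moreover have "set_integrable lborel (Ico_tb z tb) (\<lambda>x. f x * F x)"
    by (intro density_mult_integrable[OF z0] F_measurable_bounded[OF z0])
  ultimately have "(LINT x:Ico_tb z tb|lborel. (F x - s x) * f x)
      = intdF f (Ico_tb z tb) F - intdF f (Ico_tb z tb) s"
    unfolding intdF_def left_diff_distrib by (simp add: mult.commute)
  then show ?thesis using s z by (simp add: Sset_def MPS_def)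
qed

lemma IFR_integral_le_mean:
  assumes ifr: "IFR tb F f" and t0: "0 \<le> t0" "ereal t0 < tb" and s: "s \<in> Sset tb F f t0"
  shows "(LINT x:Ico_tb t0 tb|lborel. (1 - F x) * s x)
    \<le> (1 + F t0) / 2 * (LINT x:Ico_tb t0 tb|lborel. 1 - F x)"
proof -
  define I where "I = Ico_tb t0 tb"
  define c where "c = (1 + F t0) / 2"
  define g where "g x = (1 - F x) / f x" for x
  have t0_T: "t0 \<in> T" and t0_I: "t0 \<in> I" and I_T: "I \<subseteq> T"
    using t0 Ico_tb_subset_Theta[OF t0(1)] by (simp_all add: Theta_def I_def Ico_tb_def)
  note s_meas = Sset_measurable_bounded[OF s, folded I_def]
  have g_anti: "antimono_on I g"
    using ifr I_T unfolding IFR_def g_def by (rule monotone_on_subset)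
  have "g x \<le> g t0" "0 \<le> g x" if "x \<in> I" for x
    using g_anti t0_I that I_T F_le_1 f_nonneg by (auto simp: monotone_on_def I_def Ico_tb_def g_def)
  then have "bdd_below (g ` I)" "bdd_above (g ` I)"
    by (auto intro!: bdd_belowI[where m = 0] bdd_aboveI[where M = "g t0"])
  then obtain K where K: "\<And>x. x \<in> I \<Longrightarrow> g x * (s x - c) \<le> K * (s x - c)"
    using antimono_mono_pivot[OF g_anti] s by (auto simp: Sset_def I_def)
  have X_int: "set_integrable lborel I (\<lambda>x. 1 - F x)"
    using Ico_tb_mono[OF t0(1)] by (intro one_minus_F_integrable_on) (auto simp: I_def)
  have sf_int: "set_integrable lborel I (\<lambda>x. f x * s x)"
    unfolding I_def by (rule density_mult_integrable[OF t0(1) s_meas[unfolded I_def]])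
  have f_int: "set_integrable lborel I f" using I_T by (intro f_integrable_on) (auto simp: I_def)
  have "(LINT x:I|lborel. (1 - F x) * s x) \<le> (LINT x:I|lborel. c * (1 - F x) + K * (f x * s x - c * f x))"
  proof (rule set_integral_mono)
    show "set_integrable lborel I (\<lambda>x. (1 - F x) * s x)"
      unfolding I_def by (rule one_minus_F_mult_integrable[OF t0(1) s_meas[unfolded I_def]])
    show "set_integrable lborel I (\<lambda>x. c * (1 - F x) + K * (f x * s x - c * f x))"
      using X_int sf_int f_int by simp
    fix x assume x: "x \<in> I"
    have "f x * (g x * (s x - c)) \<le> f x * (K * (s x - c))"
      using x I_T K f_nonneg by (intro mult_left_mono) auto
    moreover have "1 - F x = g x * f x" using x I_T f_pos[of x] by (auto simp: g_def)
    ultimately show "(1 - F x) * s x \<le> c * (1 - F x) + K * (f x * s x - c * f x)"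
      by (simp only:) (simp add: algebra_simps)
  qed
  also have "\<dots> = c * (LINT x:I|lborel. 1 - F x) + K * ((LINT x:I|lborel. f x * s x) - c * (LINT x:I|lborel. f x))"
    using X_int sf_int f_int by simp
  also have "(LINT x:I|lborel. f x * s x) - c * (LINT x:I|lborel. f x) = 0"
    unfolding I_def Sset_integral_density[OF s t0_T] tail_integral[OF t0_T]
    by (simp add: c_def power2_eq_square algebra_simps)
  finally show ?thesis by (simp add: I_def c_def)
qed

lemma IFR_integral_le:
  assumes ifr: "IFR tb F f" and t0: "0 \<le> t0" "ereal t0 < tb" and s: "s \<in> Sset tb F f t0"
  shows "(LINT x:Ico_tb t0 tb|lborel. (1 - F x) * s x) \<le> (LINT x:Ico_tb 0 tb|lborel. (1 - F x) * (1/2))"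
proof -
  have t0_T: "t0 \<in> T" using t0 by (simp add: Theta_def)
  have "(LINT x:Ico_tb 0 tb|lborel. 1 - F x)
      = (LINT x:{0..<t0}|lborel. 1 - F x) + (LINT x:Ico_tb t0 tb|lborel. 1 - F x)"
    unfolding Ico_tb_split[OF t0_T]
    using Ico_tb_split[OF t0_T] by (intro set_integral_Un one_minus_F_integrable_on) (auto simp: Ico_tb_def)
  then show ?thesis
    using IFR_integral_le_mean[OF assms] IFR_mass_below[OF ifr t0_T] by (simp add: field_simps)
qed

lemma DFR_integral_nonneg:
  assumes dfr: "DFR tb F f" and t0: "0 \<le> t0" and s: "s \<in> Sset tb F f t0"
  shows "0 \<le> (LINT x:Ico_tb t0 tb|lborel. (1 - F x) * (F x - s x))"
proof -
  define I where "I = Ico_tb t0 tb"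
  define g where "g x = (1 - F x) / f x" for x
  have I[measurable]: "I \<in> sets borel" and I_T: "I \<subseteq> T"
    using Ico_tb_subset_Theta[OF t0] by (simp_all add: I_def)
  have g_mono: "mono_on I g"
    using dfr I_T unfolding DFR_def g_def by (rule monotone_on_subset)
  note s_meas = Sset_measurable_bounded[OF s, folded I_def]
  note F_meas = F_measurable_bounded[OF t0, folded I_def]
  have F_s_meas: "set_borel_measurable lborel I (\<lambda>x. F x - s x)"
    using F_meas(1) s_meas(1) by (simp add: set_borel_measurable_iff_restrict_space[OF I])
  have gh_eq: "g x * ((F x - s x) * f x) = (1 - F x) * (F x - s x)" if "x \<in> I" for x
    using that I_T f_pos[of x] by (auto simp: g_def)
  have "0 \<le> (LINT x:I|lborel. g x * ((F x - s x) * f x))"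
  proof (rule set_integral_nonneg_layer_cake[OF I])
    show "set_borel_measurable lborel I g" by (rule set_borel_measurable_mono_on[OF g_mono I])
    show "0 \<le> g x" if "x \<in> I" for x using that I_T F_le_1 f_nonneg by (auto simp: g_def)
    show "set_borel_measurable lborel I (\<lambda>x. (F x - s x) * f x)"
      using F_s_meas set_integrable_imp_set_borel_measurable[OF f_integrable_on[OF I I_T]]
      by (simp add: set_borel_measurable_iff_restrict_space[OF I])
    have "\<bar>F x - s x\<bar> \<le> 1" if "x \<in> I" for x
      using that I_T F_nonneg F_le_1 s by (force simp: Sset_def I_def)
    then have "set_integrable lborel I (\<lambda>x. (1 - F x) * (F x - s x))"
      using F_s_meas unfolding I_def by (intro one_minus_F_mult_integrable[OF t0])
    then show "set_integrable lborel I (\<lambda>x. g x * ((F x - s x) * f x))"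
      by (subst set_integrable_cong[OF refl refl gh_eq]) auto
    fix c :: real
    let ?S = "{x \<in> I. c < g x}"
    show "0 \<le> (LINT x:?S|lborel. (F x - s x) * f x)"
    proof (cases "?S = {}")
      case False
      moreover have "y \<in> ?S" if "x \<in> ?S" "y \<in> I" "x \<le> y" for x y
        using that g_mono by (force simp: monotone_on_def)
      ultimately obtain z where z: "z \<in> I" "?S \<subseteq> Ico_tb z tb" "Ico_tb z tb - {z} \<subseteq> ?S"
        using upward_closed_subset_Ico_tb[of ?S t0 tb] unfolding I_def by blast
      have "(LINT x:?S|lborel. (F x - s x) * f x) = (LINT x:Ico_tb z tb|lborel. (F x - s x) * f x)"
        by (rule set_integral_discrete_difference[where X = "{z}"]) (use z in auto)
      then show ?thesis using Sset_tail_integral_nonneg[OF s t0] z(1) by (simp add: I_def)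
    qed (simp add: set_lebesgue_integral_def)
  qed
  also have "\<dots> = (LINT x:I|lborel. (1 - F x) * (F x - s x))"
    by (intro set_lebesgue_integral_cong) (simp_all add: gh_eq)
  finally show ?thesis by (simp add: I_def)
qed

lemma DFR_integral_le:
  assumes dfr: "DFR tb F f" and t0: "0 \<le> t0" and s: "s \<in> Sset tb F f t0"
  shows "(LINT x:Ico_tb t0 tb|lborel. (1 - F x) * s x) \<le> (LINT x:Ico_tb 0 tb|lborel. (1 - F x) * F x)"
proof -
  let ?I = "Ico_tb t0 tb"
  have FF_int: "set_integrable lborel (Ico_tb a tb) (\<lambda>x. (1 - F x) * F x)" if "0 \<le> a" for a
    using F_measurable_bounded[OF that] by (rule one_minus_F_mult_integrable[OF that])
  have "(LINT x:?I|lborel. (1 - F x) * (F x - s x))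
      = (LINT x:?I|lborel. (1 - F x) * F x) - (LINT x:?I|lborel. (1 - F x) * s x)"
    using set_integral_diff(2)[OF FF_int[OF t0]
        one_minus_F_mult_integrable[OF t0 Sset_measurable_bounded[OF s]]]
    by (simp add: right_diff_distrib)
  then have "(LINT x:?I|lborel. (1 - F x) * s x) \<le> (LINT x:?I|lborel. (1 - F x) * F x)"
    using DFR_integral_nonneg[OF assms] by simp
  also have "\<dots> \<le> (LINT x:Ico_tb 0 tb|lborel. (1 - F x) * F x)"
  proof (rule set_integral_mono_set_nonneg[OF FF_int[OF order_refl]])
    fix x assume "x \<in> Ico_tb 0 tb"
    then have "x \<in> T" using Ico_tb_subset_Theta[of 0] by auto
    then show "0 \<le> (1 - F x) * F x" using F_nonneg F_le_1 by simp
  qed (use Ico_tb_mono[OF t0] in simp_all)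
  finally show ?thesis .
qed

end

theorem proposition4:
  fixes tb :: ereal and F f v v1 v2 :: "real \<Rightarrow> real"
  assumes "std_assms tb F f v v1 v2"
  shows "(IFR tb F f \<longrightarrow>
            (\<lambda>_. 1/2) \<in> Sset tb F f 0 \<and>
            (\<forall>t0. 0 \<le> t0 \<and> ereal t0 < tb \<longrightarrow>
               (\<forall>s\<in>Sset tb F f t0. W tb F f v v1 t0 s \<le> W tb F f v v1 0 (\<lambda>_. 1/2))))
       \<and> (DFR tb F f \<longrightarrow>
            F \<in> Sset tb F f 0 \<and>
            (\<forall>t0. 0 \<le> t0 \<and> ereal t0 < tb \<longrightarrow>
               (\<forall>s\<in>Sset tb F f t0. W tb F f v v1 t0 s \<le> W tb F f v v1 0 F)))"
proof -
  interpret standing_assumptions tb F f v v1 v2 by (rule standing_assumptions.intro[OF assms])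
  have "W tb F f v v1 t0 s \<le> W tb F f v v1 0 (\<lambda>_. 1/2)"
    if "IFR tb F f" "0 \<le> t0" "ereal t0 < tb" "s \<in> Sset tb F f t0" for t0 s
    using that by (intro W_le_W_zero half_in_Sset IFR_integral_le)
  moreover have "W tb F f v v1 t0 s \<le> W tb F f v v1 0 F"
    if "DFR tb F f" "0 \<le> t0" "s \<in> Sset tb F f t0" for t0 s
    using that by (intro W_le_W_zero F_in_Sset DFR_integral_le)
  ultimately show ?thesis using half_in_Sset F_in_Sset by blast
qed

end
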